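(* Let $\mathbf{v}\in\mathrm{GF}(q^m)^n$ have rank $r\ge0$ and let $\mathcal{L}=\langle\mathbf{v}\rangle^\perp$. Then the rank weight enumerator of $\mathcal{L}$ depends only on $r$ and is $$W^{\mathrm{R}}_{\mathcal{L}}(x,y)=q^{-m}\Big\{\big[x+(q^m-1)y\big]^{[n]}+(q^m-1)(x-y)^{[r]}*\big[x+(q^m-1)y\big]^{[n-r]}\Big\}.$$
   Context: $q$ is a prime power. For $\mathbf{x}\in\mathrm{GF}(q^m)^n$, $\mathrm{rk}(\mathbf{x})$ is the dimension over $\mathrm{GF}(q)$ of the $\mathrm{GF}(q)$-span of its coordinates in $\mathrm{GF}(q^m)$. $\langle\mathbf{v}\rangle=\{a\mathbf{v}:a\in\mathrm{GF}(q^m)\}$ and $S^\perp=\{\mathbf{u}\in\mathrm{GF}(q^m)^n:\sum_iu_is_i=0\ \forall\mathbf{s}\in S\}$. The rank weight enumerator of $\mathcal{C}\subseteq\mathrm{GF}(q^m)^n$ is $\sum_{\mathbf{c}\in\mathcal{C}}y^{\mathrm{rk}(\mathbf{c})}x^{n-\mathrm{rk}(\mathbf{c})}$. $q$-product: for homogeneous polynomials $a(x,y;m)=\sum_{i=0}^r a_i(m)y^ix^{r-i}$ and $b(x,y;m)=\sum_{j=0}^s b_j(m)y^jx^{s-j}$ of degrees $r,s$, with coefficients real functions of $m$ (zero for indices outside the given ranges), $a*b=\sum_{u=0}^{r+s}c_u(m)y^ux^{r+s-u}$ with $c_u(m)=\sum_{i=0}^uq^{is}a_i(m)b_{u-i}(m-i)$.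 $q$-powers: $a^{[0]}=1$, $a^{[l]}=a^{[l-1]}*a$. Here $x+(q^m-1)y$ has coefficients $a_0(m)=1$, $a_1(m)=q^m-1$, and $x-y$ has coefficients $1,-1$. *)

theory Defs
  imports Complex_Main
begin

(* F is a subfield of the field 'a (here: GF(q) inside GF(q^m)) *)
definition is_subfield :: "'a::field set \<Rightarrow> bool" where
  "is_subfield F \<longleftrightarrow> 0 \<in> F \<and> 1 \<in> F \<and>
     (\<forall>a\<in>F. \<forall>b\<in>F. a + b \<in> F \<and> a * b \<in> F \<and> - a \<in> F) \<and>
     (\<forall>a\<in>F. a \<noteq> 0 \<longrightarrow> inverse a \<in> F)"

definition Fspan :: "'a::field set \<Rightarrow> 'a set \<Rightarrow> 'a set" where
  "Fspan F S = {y. \<exists>T c. finite T \<and> T \<subseteq> S \<and> (\<forall>t\<in>T. c t \<in> F) \<and> y = (\<Sum>t\<in>T. c t * t)}"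

definition Fdim :: "'a::field set \<Rightarrow> 'a set \<Rightarrow> nat" where
  "Fdim F S = (LEAST k. \<exists>B. finite B \<and> card B = k \<and> B \<subseteq> Fspan F S \<and> Fspan F B = Fspan F S)"

(* vectors of length n: functions nat => 'a vanishing outside {..<n} *)
definition vecs :: "nat \<Rightarrow> (nat \<Rightarrow> 'a::zero) set" where
  "vecs n = {x. \<forall>i\<ge>n. x i = 0}"

definition rk :: "'a::field set \<Rightarrow> nat \<Rightarrow> (nat \<Rightarrow> 'a) \<Rightarrow> nat" where
  "rk F n x = Fdim F (x ` {..<n})"

definition span1 :: "(nat \<Rightarrow> 'a::field) \<Rightarrow> (nat \<Rightarrow> 'a) set" where
  "span1 v = {(\<lambda>i. a * v i) | a. True}"

definition perp :: "nat \<Rightarrow> (nat \<Rightarrow> 'a::field) set \<Rightarrow> (nat \<Rightarrow> 'a) set" where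
  "perp n S = {u \<in> vecs n. \<forall>s\<in>S. (\<Sum>i<n. u i * s i) = 0}"

(* Homogeneous polynomials sum_i a_i(m) y^i x^(deg-i): pair (deg, a),
   a :: nat => int => real, coefficient index then parameter m. *)
type_synonym hpoly = "nat \<times> (nat \<Rightarrow> int \<Rightarrow> real)"

definition qprod :: "real \<Rightarrow> hpoly \<Rightarrow> hpoly \<Rightarrow> hpoly" where
  "qprod q A B = (case A of (r, a) \<Rightarrow> case B of (s, b) \<Rightarrow>
     (r + s, \<lambda>u m. if u \<le> r + s then
        (\<Sum>i\<le>u. q ^ (i * s) * (if i \<le> r then a i m else 0)
                 * (if u - i \<le> s then b (u - i) (m - int i) else 0))
      else 0))"

fun qpow :: "real \<Rightarrow> hpoly \<Rightarrow> nat \<Rightarrow> hpoly" where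
  "qpow q p 0 = (0, \<lambda>i m. if i = 0 then 1 else 0)"
| "qpow q p (Suc l) = qprod q (qpow q p l) p"

(* x + (q^m - 1) y *)
definition hp_A :: "real \<Rightarrow> hpoly" where
  "hp_A q = (1, \<lambda>i m. if i = 0 then 1 else if i = 1 then q powi m - 1 else 0)"

(* x - y *)
definition hp_B :: "hpoly" where
  "hp_B = (1, \<lambda>i m. if i = 0 then 1 else if i = 1 then -1 else 0)"

definition hp_eval :: "hpoly \<Rightarrow> int \<Rightarrow> real \<Rightarrow> real \<Rightarrow> real" where
  "hp_eval p m x y = (\<Sum>u\<le>fst p. snd p u m * y ^ u * x ^ (fst p - u))"

definition rank_weight_enum :: "'a::field set \<Rightarrow> nat \<Rightarrow> (nat \<Rightarrow> 'a) set \<Rightarrow> real \<Rightarrow> real \<Rightarrow> real" where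
  "rank_weight_enum F n C x y = (\<Sum>c\<in>C. y ^ rk F n c * x ^ (n - rk F n c))"

end

theory Submission
  imports Defs "HOL-Combinatorics.Permutations"
begin

(* Let N(c, k) be the number of u in GF(q^m)^n with u . c = 0 and rank k. By induction on n,
   N(c, k) equals the coefficient of y^k x^(n-k) of the claimed polynomial with r = rk c.
   If the coordinates of c in GF(q^m)^(n+1) are GF(q)-dependent, a transposition and a shear,
   which preserve ranks and orthogonality counts, make the last coordinate of c zero. The last
   coordinate z of u is then free: u(n := z) keeps the rank of u for the q^rk(u) values z in the
   span of the coordinates of u and raises it for the other q^m - q^rk(u); this is the recursion
   of the q-product with x + (q^m - 1) y. If the coordinates of c = (c', d) are independent, z is
   forced to be -(u . c')/d, and whether it lies in the span of the coordinates of u is counted by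
   averaging over the q^n full-rank vectors c' + d l with l in GF(q)^n; this yields the
   recursion of the q-product with x - y. *)

section \<open>Coefficients of q-products\<close>

definition hp_wf :: "hpoly \<Rightarrow> bool" where
  "hp_wf p \<longleftrightarrow> (\<forall>u m. fst p < u \<longrightarrow> snd p u m = 0)"

lemma fst_qprod [simp]: "fst (qprod q A B) = fst A + fst B"
  by (simp add: qprod_def split: prod.splits)

lemma hp_wf_qprod [simp]: "hp_wf (qprod q A B)"
  by (simp add: hp_wf_def qprod_def split: prod.splits)

lemma hp_wf_qpow [simp]: "hp_wf (qpow q p l)"
  by (cases l) (simp_all add: hp_wf_def [of "(_, _)"])

lemma fst_qpow [simp]: "fst (qpow q p l) = l * fst p"
  by (induct l) auto

lemma hp_wf_hp_A [simp]: "hp_wf (hp_A q)" and fst_hp_A [simp]: "fst (hp_A q) = 1"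
  by (auto simp: hp_wf_def hp_A_def)

lemma hp_wf_hp_B [simp]: "hp_wf hp_B" and fst_hp_B [simp]: "fst hp_B = 1"
  by (auto simp: hp_wf_def hp_B_def)

lemma snd_qprod:
  assumes "hp_wf A" "hp_wf B"
  shows "snd (qprod q A B) u m =
    (\<Sum>i\<le>u. q ^ (i * fst B) * snd A i m * snd B (u - i) (m - int i))"
proof -
  obtain r a s b where AB: "A = (r, a)" "B = (s, b)" by (cases A, cases B)
  have a: "a i m' = 0" if "i > r" for i m'
    using assms(1) AB that unfolding hp_wf_def by auto
  have b: "b i m' = 0" if "i > s" for i m'
    using assms(2) AB that unfolding hp_wf_def by auto
  have "a i m * b (u - i) (m - int i) = 0" if "r + s < u" for i
    using a b that by (cases "i \<le> r") auto
  then have "(\<Sum>i\<le>u. q ^ (i * s) * a i m * b (u - i) (m - int i)) = 0" if "\<not> u \<le> r + s"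
    using that by (intro sum.neutral) (simp add: mult.assoc)
  then show ?thesis
    by (auto simp: AB qprod_def a b not_le intro!: sum.cong)
qed

lemma hpoly_eqI:
  assumes "fst A = fst B" "\<And>u m. snd A u m = snd B u m"
  shows "A = B"
  using assms by (metis prod_eqI ext)

lemma qprod_assoc:
  assumes "hp_wf X" "hp_wf Y" "hp_wf Z"
  shows "qprod q (qprod q X Y) Z = qprod q X (qprod q Y Z)"
proof (rule hpoly_eqI)
  fix u m
  define s where "s = fst Y"
  define t where "t = fst Z"
  define G where "G i l = q ^ (i * s + (i + l) * t) * snd X i m * snd Y l (m - int i)
                     * snd Z (u - (i + l)) (m - int (i + l))" for i l
  have "snd (qprod q (qprod q X Y) Z) u m =
     (\<Sum>j\<le>u. q ^ (j * t) * (\<Sum>i\<le>j. q ^ (i * s) * snd X i m * snd Y (j - i) (m - int i))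
        * snd Z (u - j) (m - int j))"
    using assms by (simp add: snd_qprod s_def t_def)
  also have "\<dots> = (\<Sum>j\<le>u. \<Sum>i\<le>j. G i (j - i))"
    by (auto simp: G_def sum_distrib_left sum_distrib_right power_add intro!: sum.cong)
  also have "\<dots> = (\<Sum>(i, l)\<in>{(i, l). i + l \<le> u}. G i l)"
    by (rule sum.triangle_reindex_eq [symmetric])
  also have "{(i, l). i + l \<le> u} = Sigma {..u} (\<lambda>i. {..u - i})"
    by auto
  also have "(\<Sum>(i, l)\<in>Sigma {..u} (\<lambda>i. {..u - i}). G i l) = (\<Sum>i\<le>u. \<Sum>l\<le>u - i. G i l)"
    by (rule sum.Sigma [symmetric]) auto
  also have "\<dots> = (\<Sum>i\<le>u. q ^ (i * (s + t)) * snd X i m *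
      (\<Sum>l\<le>u - i. q ^ (l * t) * snd Y l (m - int i) * snd Z (u - i - l) (m - int i - int l)))"
    by (auto simp: G_def sum_distrib_left power_add algebra_simps intro!: sum.cong)
  also have "\<dots> = snd (qprod q X (qprod q Y Z)) u m"
    using assms by (simp add: snd_qprod s_def t_def mult.assoc)
  finally show "snd (qprod q (qprod q X Y) Z) u m = snd (qprod q X (qprod q Y Z)) u m" .
qed simp

lemma hp_wf_one [simp]: "hp_wf (0, \<lambda>i m. if i = 0 then 1 else 0)"
  by (simp add: hp_wf_def)

lemma qprod_one_right [simp]: "hp_wf X \<Longrightarrow> qprod q X (0, \<lambda>i m. if i = 0 then 1 else 0) = X"
  by (rule hpoly_eqI) (simp_all add: snd_qprod hp_wf_def [of "(_, _)"] if_distrib sum.delta cong: if_cong)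

lemma qprod_one_left [simp]:
  assumes "hp_wf X"
  shows "qprod q (0, \<lambda>i m. if i = 0 then 1 else 0) X = X"
proof (rule hpoly_eqI)
  fix u m
  have "snd (qprod q (0, \<lambda>i m. if i = 0 then 1 else 0) X) u m =
      (\<Sum>i\<le>u. q ^ (i * fst X) * (if i = 0 then 1 else 0) * snd X (u - i) (m - int i))"
    using assms by (simp add: snd_qprod)
  also have "\<dots> = (\<Sum>i\<le>u. if i = 0 then snd X u m else 0)"
    by (rule sum.cong) auto
  finally show "snd (qprod q (0, \<lambda>i m. if i = 0 then 1 else 0) X) u m = snd X u m"
    by simp
qed simp

definition hp_coeff :: "hpoly \<Rightarrow> int \<Rightarrow> int \<Rightarrow> real" where
  "hp_coeff p k m = (if k < 0 then 0 else snd p (nat k) m)"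

lemma hp_coeff_neg [simp]: "k < 0 \<Longrightarrow> hp_coeff p k m = 0"
  by (simp add: hp_coeff_def)

lemma hp_coeff_of_nat [simp]: "hp_coeff p (int k) m = snd p k m"
  by (simp add: hp_coeff_def)

lemma hp_coeff_qprod_linear:
  assumes Y: "hp_wf Y" and P: "hp_wf P" "fst P = 1"
  shows "hp_coeff (qprod q Y P) j m =
     q powi j * hp_coeff Y j m * snd P 0 (m - j)
     + q powi (j - 1) * hp_coeff Y (j - 1) m * snd P 1 (m - (j - 1))"
proof (cases "j < 0")
  case False
  then obtain J where J: "j = int J"
    by (metis nat_0_le not_less)
  show ?thesis
  proof (cases J)
    case 0
    then show ?thesis
      using Y P J by (simp add: snd_qprod hp_coeff_def)
  next
    case (Suc K)
    have P_high: "snd P (Suc (K - i)) m' = 0" if "i < K" for i m'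
      using P that by (simp add: hp_wf_def)
    have "hp_coeff (qprod q Y P) j m = snd (qprod q Y P) (Suc K) m"
      using J Suc by (simp only: hp_coeff_of_nat)
    also have "\<dots> = (\<Sum>i\<le>Suc K. q ^ i * snd Y i m * snd P (Suc K - i) (m - int i))"
      using Y P by (simp add: snd_qprod)
    also have "\<dots> = q ^ K * snd Y K m * snd P 1 (m - int K)
        + q ^ Suc K * snd Y (Suc K) m * snd P 0 (m - int (Suc K))"
      by (simp add: lessThan_Suc_atMost [symmetric] Suc_diff_le P_high)
    moreover have e: "hp_coeff Y j m = snd Y (Suc K) m" "hp_coeff Y (j - 1) m = snd Y K m"
        "q powi j = q ^ Suc K" "q powi (j - 1) = q ^ K" "m - j = m - int (Suc K)" "m - (j - 1) = m - int K"
      using J Suc by (simp_all add: hp_coeff_def power_int_def nat_add_distrib)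
    ultimately show ?thesis
      by (simp only: e add.commute)
  qed
qed simp

lemma hp_coeff_qprod_hp_A:
  assumes "hp_wf Y" "q \<noteq> 0"
  shows "hp_coeff (qprod q Y (hp_A q)) j m =
    q powi j * hp_coeff Y j m + (q powi m - q powi (j - 1)) * hp_coeff Y (j - 1) m"
proof -
  have "q powi (j - 1) * (q powi (m - (j - 1)) - 1) = q powi m - q powi (j - 1)"
    using assms(2) by (simp add: right_diff_distrib power_int_add [symmetric])
  then show ?thesis
    using hp_coeff_qprod_linear [OF assms(1) hp_wf_hp_A fst_hp_A, where q = q and j = j and m = m]
    by (simp add: hp_A_def mult_ac)
qed

lemma hp_coeff_qprod_hp_B:
  assumes "hp_wf Y"
  shows "hp_coeff (qprod q Y hp_B) j m = q powi j * hp_coeff Y j m - q powi (j - 1) * hp_coeff Y (j - 1) m"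
  using hp_coeff_qprod_linear [OF assms hp_wf_hp_B fst_hp_B, where q = q and j = j and m = m]
  by (simp add: hp_B_def)

definition dual_enum_coeff :: "real \<Rightarrow> int \<Rightarrow> nat \<Rightarrow> nat \<Rightarrow> int \<Rightarrow> real" where
  "dual_enum_coeff q m n r k = q powi (- m) *
     (hp_coeff (qpow q (hp_A q) n) k m
      + (q powi m - 1) * hp_coeff (qprod q (qpow q hp_B r) (qpow q (hp_A q) (n - r))) k m)"

lemma dual_enum_coeff_rank_0:
  assumes "q \<noteq> 0"
  shows "dual_enum_coeff q m n 0 k = hp_coeff (qpow q (hp_A q) n) k m"
proof -
  have "q powi (- m) * q powi m = 1"
    using assms by (simp add: power_int_minus field_simps)
  then show ?thesis
    by (simp add: dual_enum_coeff_def algebra_simps)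
qed

lemma dual_enum_coeff_0_0:
  "q \<noteq> 0 \<Longrightarrow> dual_enum_coeff q m 0 0 k = of_bool (k = 0)"
  by (simp add: dual_enum_coeff_rank_0 hp_coeff_def)

lemma dual_enum_coeff_Suc:
  assumes "q \<noteq> 0" "r \<le> n"
  shows "dual_enum_coeff q m (Suc n) r k =
    q powi k * dual_enum_coeff q m n r k + (q powi m - q powi (k - 1)) * dual_enum_coeff q m n r (k - 1)"
proof -
  have "qprod q (qpow q hp_B r) (qpow q (hp_A q) (Suc n - r))
      = qprod q (qprod q (qpow q hp_B r) (qpow q (hp_A q) (n - r))) (hp_A q)"
    using assms(2) by (simp add: Suc_diff_le qprod_assoc)
  then show ?thesis
    using assms(1) by (simp add: dual_enum_coeff_def hp_coeff_qprod_hp_A algebra_simps)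
qed

lemma dual_enum_coeff_Suc_Suc:
  assumes "q \<noteq> 0"
  shows "dual_enum_coeff q m (Suc n) (Suc n) k = q powi k * dual_enum_coeff q m n n k
    + dual_enum_coeff q m n 0 (k - 1) - q powi (k - 1) * dual_enum_coeff q m n n (k - 1)"
proof -
  have "q powi (- m) * q powi m = 1"
    using assms by (simp add: power_int_minus field_simps)
  then show ?thesis
    using assms
    by (simp add: dual_enum_coeff_def hp_coeff_qprod_hp_A hp_coeff_qprod_hp_B algebra_simps)
qed

lemma sum_dual_enum_coeff_eq_hp_eval:
  assumes "r \<le> n"
  shows "(\<Sum>k\<le>n. dual_enum_coeff q m n r (int k) * (y ^ k * x ^ (n - k))) =
    q powi (- m) * (hp_eval (qpow q (hp_A q) n) m x y
      + (q powi m - 1) * hp_eval (qprod q (qpow q hp_B r) (qpow q (hp_A q) (n - r))) m x y)"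
  using assms
  by (simp add: dual_enum_coeff_def hp_eval_def sum.distrib sum_subtractf sum_distrib_left algebra_simps)

section \<open>Vectors and inner products\<close>

definition dot :: "nat \<Rightarrow> (nat \<Rightarrow> 'a::comm_ring) \<Rightarrow> (nat \<Rightarrow> 'a) \<Rightarrow> 'a" where
  "dot n u c = (\<Sum>i<n. u i * c i)"

lemma dot_commute: "dot n u c = dot n c u"
  by (simp add: dot_def mult.commute)

lemma dot_Suc: "dot (Suc n) u c = dot n u c + u n * c n"
  by (simp add: dot_def)

lemma dot_fun_upd_left [simp]: "dot n (u(n := z)) c = dot n u c"
  and dot_fun_upd_right [simp]: "dot n u (c(n := z)) = dot n u c"
  by (auto simp: dot_def intro: sum.cong)

lemma dot_add_left: "dot n (\<lambda>i. u i + u' i) c = dot n u c + dot n u' c"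
  by (simp add: dot_def sum.distrib distrib_right)

lemma dot_diff_left: "dot n (\<lambda>i. u i - u' i) c = dot n u c - dot n u' c"
  by (simp add: dot_def sum_subtractf left_diff_distrib)

lemma dot_add_scaled_right: "dot n u (\<lambda>i. c i + d * l i) = dot n u c + d * dot n u l"
  by (simp add: dot_def sum.distrib distrib_left sum_distrib_left mult_ac)

lemma vecs_0: "vecs 0 = {\<lambda>_. 0}"
  by (auto simp: vecs_def)

lemma vecs_Suc: "vecs (Suc n) = (\<lambda>(u, z). u(n := z)) ` (vecs n \<times> UNIV)"
proof
  show "vecs (Suc n) \<subseteq> (\<lambda>(u, z). u(n := z)) ` (vecs n \<times> UNIV)"
  proof
    fix w assume "w \<in> vecs (Suc n)"
    then have "w(n := 0) \<in> vecs n" "w = (\<lambda>(u, z). u(n := z)) (w(n := 0), w n)"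
      by (auto simp: vecs_def)
    then show "w \<in> (\<lambda>(u, z). u(n := z)) ` (vecs n \<times> UNIV)"
      by blast
  qed
qed (auto simp: vecs_def)

lemma inj_on_fun_upd_vecs: "inj_on (\<lambda>(u, z). u(n := z)) (vecs n \<times> UNIV)"
proof (rule inj_onI, clarify)
  fix u z u' z' assume u: "u \<in> vecs n" "u' \<in> vecs n" and eq: "u(n := z) = u'(n := z')"
  have "u i = u' i" for i
    using fun_cong [OF eq, of i] u by (cases "i = n") (auto simp: vecs_def)
  then show "u = u' \<and> z = z'"
    using fun_cong [OF eq, of n] by auto
qed

lemma finite_vecs [simp]: "finite (vecs n :: (nat \<Rightarrow> 'a::{zero,finite}) set)"
  by (induction n) (simp_all add: vecs_0 vecs_Suc)

lemma zero_in_vecs [simp]: "(\<lambda>_. 0) \<in> vecs n"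
  by (simp add: vecs_def)

lemma sum_vecs_Suc:
  fixes g :: "(nat \<Rightarrow> 'a::{zero,finite}) \<Rightarrow> 'b::comm_monoid_add"
  shows "(\<Sum>w\<in>vecs (Suc n). g w) = (\<Sum>u\<in>vecs n. \<Sum>z\<in>UNIV. g (u(n := z)))"
proof -
  have "(\<Sum>w\<in>vecs (Suc n). g w) = (\<Sum>(u, z)\<in>vecs n \<times> UNIV. g (u(n := z)))"
    unfolding vecs_Suc sum.reindex [OF inj_on_fun_upd_vecs] by (rule sum.cong) auto
  then show ?thesis
    by (simp add: sum.cartesian_product)
qed

lemma dot_permute:
  assumes "\<sigma> permutes {..<n}"
  shows "dot n (u \<circ> \<sigma>) (c \<circ> \<sigma>) = dot n u c"
  unfolding dot_def using sum.permute [OF assms, of "\<lambda>i. u i * c i"] by (simp add: comp_def)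

lemma bij_betw_permute_vecs:
  assumes "\<sigma> permutes {..<n}"
  shows "bij_betw (\<lambda>u. u \<circ> \<sigma>) (vecs n) (vecs n)"
proof (rule bij_betw_byWitness [where f' = "\<lambda>u. u \<circ> inv \<sigma>"])
  have "(\<lambda>u. u \<circ> \<tau>) ` vecs n \<subseteq> vecs n" if "\<tau> permutes {..<n}" for \<tau>
    using permutes_not_in [OF that] by (auto simp: vecs_def)
  then show "(\<lambda>u. u \<circ> \<sigma>) ` vecs n \<subseteq> vecs n" "(\<lambda>u. u \<circ> inv \<sigma>) ` vecs n \<subseteq> vecs n"
    using assms permutes_inv by blast+
qed (simp_all add: comp_assoc permutes_inv_o [OF assms])

definition shear :: "nat \<Rightarrow> (nat \<Rightarrow> 'a::ring) \<Rightarrow> 'a \<Rightarrow> (nat \<Rightarrow> 'a) \<Rightarrow> nat \<Rightarrow> 'a" where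
  "shear n \<mu> s w = (\<lambda>i. if i < n then w i + s * w n * \<mu> i else w i)"

lemma shear_shear_uminus [simp]: "shear n \<mu> (- s) (shear n \<mu> s w) = w"
  by (simp add: shear_def fun_eq_iff)

lemma shear_uminus_shear [simp]: "shear n \<mu> s (shear n \<mu> (- s) w) = w"
  by (simp add: shear_def fun_eq_iff)

lemma bij_betw_shear_vecs: "bij_betw (shear n \<mu> s) (vecs (Suc n)) (vecs (Suc n))"
  by (rule bij_betw_byWitness [where f' = "shear n \<mu> (- s)"]) (auto simp: shear_def vecs_def)

lemma dot_shear:
  "dot (Suc n) (shear n \<mu> s w) c = dot (Suc n) w c + s * w n * dot n \<mu> c"
  by (simp add: dot_Suc shear_def dot_def algebra_simps sum.distrib sum_distrib_left)

lemma perp_span1: "perp n (span1 v) = {u \<in> vecs n. dot n u v = 0}"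
proof -
  have "(\<forall>s\<in>span1 v. dot n u s = 0) \<longleftrightarrow> dot n u v = 0" for u
  proof
    assume "\<forall>s\<in>span1 v. dot n u s = 0"
    moreover have "(\<lambda>i. 1 * v i) \<in> span1 v"
      unfolding span1_def by blast
    ultimately show "dot n u v = 0"
      by fastforce
  qed (auto simp: span1_def dot_def sum_distrib_left [symmetric] mult.left_commute)
  then show ?thesis
    by (auto simp: perp_def dot_def)
qed

section \<open>Spans and ranks over a finite subfield\<close>

locale finite_subfield =
  fixes F :: "'a::{field,finite} set" and q :: nat
  assumes subfield: "is_subfield F" and card_F: "card F = q"
begin

lemma subfield_0: "0 \<in> F" and subfield_1: "1 \<in> F"
  using subfield by (auto simp: is_subfield_def)

lemma subfield_add: "a \<in> F \<Longrightarrow> b \<in> F \<Longrightarrow> a + b \<in> F"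
  and subfield_mult: "a \<in> F \<Longrightarrow> b \<in> F \<Longrightarrow> a * b \<in> F"
  and subfield_uminus: "a \<in> F \<Longrightarrow> - a \<in> F"
  using subfield by (auto simp: is_subfield_def)

lemma subfield_inverse: "a \<in> F \<Longrightarrow> inverse a \<in> F"
  using subfield by (cases "a = 0") (auto simp: is_subfield_def)

lemma subfield_diff: "a \<in> F \<Longrightarrow> b \<in> F \<Longrightarrow> a - b \<in> F"
  using subfield_add subfield_uminus by (metis diff_conv_add_uminus)

lemma subfield_sum: "(\<And>i. i \<in> A \<Longrightarrow> g i \<in> F) \<Longrightarrow> sum g A \<in> F"
  by (induction A rule: infinite_finite_induct) (auto intro: subfield_add subfield_0)

lemma two_le_q: "2 \<le> q"
proof -
  have "card {0::'a, 1} \<le> card F"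
    using subfield_0 subfield_1 by (intro card_mono) auto
  then show ?thesis
    using card_F by simp
qed

lemma Fspan_eq: "Fspan F S = {\<Sum>t\<in>S. c t * t | c. \<forall>t\<in>S. c t \<in> F}"
proof (intro set_eqI iffI)
  fix y assume "y \<in> Fspan F S"
  then obtain T c where T: "T \<subseteq> S" "\<forall>t\<in>T. c t \<in> F" "y = (\<Sum>t\<in>T. c t * t)"
    unfolding Fspan_def by blast
  define c' where "c' t = (if t \<in> T then c t else 0)" for t
  have "y = (\<Sum>t\<in>S. c' t * t)"
    using T by (simp add: c'_def if_distrib [of "\<lambda>a. a * _"] sum.If_cases Int_absorb1 cong: if_cong)
  moreover have "\<forall>t\<in>S. c' t \<in> F"
    using T(2) subfield_0 by (simp add: c'_def)
  ultimately show "y \<in> {\<Sum>t\<in>S. c t * t | c. \<forall>t\<in>S. c t \<in> F}"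
    by blast
next
  fix y assume "y \<in> {\<Sum>t\<in>S. c t * t | c. \<forall>t\<in>S. c t \<in> F}"
  then show "y \<in> Fspan F S"
    unfolding Fspan_def using finite [of S] by blast
qed

lemma zero_in_Fspan: "0 \<in> Fspan F S"
  unfolding Fspan_eq using subfield_0 by (auto intro!: exI [of _ "\<lambda>_. 0"])

lemma Fspan_add:
  assumes "x \<in> Fspan F S" "y \<in> Fspan F S"
  shows "x + y \<in> Fspan F S"
proof -
  obtain c c' where "\<forall>t\<in>S. c t \<in> F" "x = (\<Sum>t\<in>S. c t * t)"
    "\<forall>t\<in>S. c' t \<in> F" "y = (\<Sum>t\<in>S. c' t * t)"
    using assms unfolding Fspan_eq by blast
  then show ?thesis
    unfolding Fspan_eq
    by (auto intro!: exI [of _ "\<lambda>t. c t + c' t"] subfield_add simp: sum.distrib distrib_right)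
qed

lemma Fspan_scale:
  assumes "a \<in> F" "x \<in> Fspan F S"
  shows "a * x \<in> Fspan F S"
proof -
  obtain c where "\<forall>t\<in>S. c t \<in> F" "x = (\<Sum>t\<in>S. c t * t)"
    using assms(2) unfolding Fspan_eq by blast
  then show ?thesis
    unfolding Fspan_eq using assms(1)
    by (auto intro!: exI [of _ "\<lambda>t. a * c t"] subfield_mult simp: sum_distrib_left mult.assoc)
qed

lemma Fspan_diff: "x \<in> Fspan F S \<Longrightarrow> y \<in> Fspan F S \<Longrightarrow> x - y \<in> Fspan F S"
  using Fspan_add Fspan_scale [of "- 1"] subfield_1 subfield_uminus by (metis diff_conv_add_uminus mult_minus1)

lemma Fspan_sum: "(\<And>i. i \<in> A \<Longrightarrow> g i \<in> Fspan F S) \<Longrightarrow> sum g A \<in> Fspan F S"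
  by (induction A rule: infinite_finite_induct) (auto intro: Fspan_add zero_in_Fspan)

lemma Fspan_superset: "t \<in> S \<Longrightarrow> t \<in> Fspan F S"
  unfolding Fspan_def using subfield_1 by (auto intro!: exI [of _ "{t}"] exI [of _ "\<lambda>_. 1"])

lemma Fspan_minimal:
  assumes "S \<subseteq> W" "0 \<in> W" "\<And>x y. x \<in> W \<Longrightarrow> y \<in> W \<Longrightarrow> x + y \<in> W"
    "\<And>a x. a \<in> F \<Longrightarrow> x \<in> W \<Longrightarrow> a * x \<in> W"
  shows "Fspan F S \<subseteq> W"
proof
  fix y assume "y \<in> Fspan F S"
  then obtain c where c: "\<forall>t\<in>S. c t \<in> F" "y = (\<Sum>t\<in>S. c t * t)"
    unfolding Fspan_eq by blast
  have "(\<Sum>t\<in>A. c t * t) \<in> W" if "A \<subseteq> S" for A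
    using finite [of A] that by (induction A rule: finite_induct) (use assms c in auto)
  then show "y \<in> W"
    using c by simp
qed

lemma Fspan_subset: "S \<subseteq> Fspan F T \<Longrightarrow> Fspan F S \<subseteq> Fspan F T"
  by (rule Fspan_minimal) (auto intro: zero_in_Fspan Fspan_add Fspan_scale)

lemma Fspan_mono: "S \<subseteq> T \<Longrightarrow> Fspan F S \<subseteq> Fspan F T"
  by (rule Fspan_subset) (auto intro: Fspan_superset)

lemma Fspan_empty: "Fspan F {} = {0}"
  unfolding Fspan_eq by auto

lemma Fspan_insert: "Fspan F (insert z S) = {s + a * z | s a. s \<in> Fspan F S \<and> a \<in> F}"
  (is "_ = ?W")
proof
  have "z \<in> ?W"
    using zero_in_Fspan subfield_1 by force
  moreover have "S \<subseteq> ?W"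
    using Fspan_superset subfield_0 by force
  moreover have "x + y \<in> ?W" if xy: "x \<in> ?W" "y \<in> ?W" for x y
  proof -
    obtain s a s' a' where "x = s + a * z" "y = s' + a' * z" "s \<in> Fspan F S" "s' \<in> Fspan F S"
      "a \<in> F" "a' \<in> F"
      using xy by blast
    moreover have "x + y = (s + s') + (a + a') * z"
      using calculation by (simp add: algebra_simps)
    ultimately show ?thesis
      using Fspan_add subfield_add by blast
  qed
  moreover have "b * x \<in> ?W" if b: "b \<in> F" and x: "x \<in> ?W" for b x
  proof -
    obtain s a where "x = s + a * z" "s \<in> Fspan F S" "a \<in> F"
      using x by blast
    moreover have "b * x = b * s + (b * a) * z"
      using calculation by (simp add: algebra_simps)
    ultimately show ?thesis
      using b Fspan_scale subfield_mult by blast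
  qed
  moreover have "0 \<in> ?W"
    using zero_in_Fspan subfield_0 by force
  ultimately show "Fspan F (insert z S) \<subseteq> ?W"
    by (intro Fspan_minimal) auto
  have "Fspan F S \<subseteq> Fspan F (insert z S)" "z \<in> Fspan F (insert z S)"
    by (auto intro: Fspan_superset simp: Fspan_mono subset_insertI)
  then show "?W \<subseteq> Fspan F (insert z S)"
    by (auto intro: Fspan_add Fspan_scale)
qed

lemma Fspan_insert_absorb: "z \<in> Fspan F S \<Longrightarrow> Fspan F (insert z S) = Fspan F S"
  by (intro subset_antisym Fspan_subset Fspan_mono) (auto intro: Fspan_superset)

lemma card_Fspan_insert:
  assumes z: "z \<notin> Fspan F S"
  shows "card (Fspan F (insert z S)) = q * card (Fspan F S)"
proof -
  have "inj_on (\<lambda>(s, a). s + a * z) (Fspan F S \<times> F)"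
  proof (rule inj_onI, clarsimp)
    fix s a s' a' assume s: "s \<in> Fspan F S" "s' \<in> Fspan F S" and a: "a \<in> F" "a' \<in> F"
      and eq: "s + a * z = s' + a' * z"
    show "s = s' \<and> a = a'"
    proof (cases "a = a'")
      case False
      then have "z = inverse (a - a') * (s' - s)"
        using eq by (simp add: field_simps)
      moreover have "inverse (a - a') * (s' - s) \<in> Fspan F S"
        using s a by (intro Fspan_scale subfield_inverse subfield_diff Fspan_diff)
      ultimately show ?thesis
        using z by simp
    qed (use eq in simp)
  qed
  moreover have "Fspan F (insert z S) = (\<lambda>(s, a). s + a * z) ` (Fspan F S \<times> F)"
    unfolding Fspan_insert by auto
  ultimately show ?thesis
    by (simp add: card_image card_cartesian_product card_F)
qed

lemma card_Fspan_le: "card (Fspan F B) \<le> q ^ card B"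
proof (induction B rule: infinite_finite_induct)
  case (insert z B)
  have "q ^ card B \<le> q ^ card (insert z B)"
    using insert(1,2) two_le_q by (intro power_increasing) auto
  show ?case
  proof (cases "z \<in> Fspan F B")
    case True
    then show ?thesis
      using insert(3) \<open>q ^ card B \<le> q ^ card (insert z B)\<close> Fspan_insert_absorb by simp
  next
    case False
    then show ?thesis
      using insert card_Fspan_insert by simp
  qed
qed (simp_all add: Fspan_empty)

lemma Fspan_basis_exists:
  "\<exists>B. B \<subseteq> S \<and> Fspan F B = Fspan F S \<and> card (Fspan F S) = q ^ card B"
proof (induction S rule: infinite_finite_induct)
  case (insert z S)
  then obtain B where B: "B \<subseteq> S" "Fspan F B = Fspan F S" "card (Fspan F S) = q ^ card B"
    by blast
  show ?case
  proof (cases "z \<in> Fspan F S")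
    case True
    then show ?thesis
      using B Fspan_insert_absorb by (intro exI [of _ B]) auto
  next
    case False
    have "Fspan F (insert z B) = Fspan F (insert z S)"
      unfolding Fspan_insert B(2) ..
    moreover have "z \<notin> B"
      using B(1) insert(2) by blast
    ultimately show ?thesis
      using B card_Fspan_insert [OF False] insert(1) by (intro exI [of _ "insert z B"]) (auto intro: finite_subset)
  qed
qed (simp_all add: Fspan_empty)

lemma card_Fspan: "card (Fspan F S) = q ^ Fdim F S"
proof -
  obtain B where B: "B \<subseteq> S" "Fspan F B = Fspan F S" "card (Fspan F S) = q ^ card B"
    using Fspan_basis_exists by blast
  have "Fdim F S = card B"
    unfolding Fdim_def
  proof (rule Least_equality)
    show "\<exists>B'. finite B' \<and> card B' = card B \<and> B' \<subseteq> Fspan F S \<and> Fspan F B' = Fspan F S"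
      using B Fspan_superset by (intro exI [of _ B]) auto
    fix k assume "\<exists>B'. finite B' \<and> card B' = k \<and> B' \<subseteq> Fspan F S \<and> Fspan F B' = Fspan F S"
    then obtain B' where "card B' = k" "Fspan F B' = Fspan F S"
      by blast
    then have "q ^ card B \<le> q ^ k"
      using card_Fspan_le [of B'] B(3) by simp
    then show "card B \<le> k"
      using two_le_q by (simp add: power_increasing_iff)
  qed
  then show ?thesis
    using B by simp
qed

definition scalar_vecs :: "nat \<Rightarrow> (nat \<Rightarrow> 'a) set" where
  "scalar_vecs n = {l \<in> vecs n. \<forall>i<n. l i \<in> F}"

lemma finite_scalar_vecs [simp]: "finite (scalar_vecs n)"
  by (rule finite_subset [OF _ finite_vecs]) (auto simp: scalar_vecs_def)

lemma zero_in_scalar_vecs [simp]: "(\<lambda>_. 0) \<in> scalar_vecs n"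
  using subfield_0 by (simp add: scalar_vecs_def)

lemma card_scalar_vecs: "card (scalar_vecs n) = q ^ n"
proof (induction n)
  case 0
  have "scalar_vecs 0 = {\<lambda>_. 0}"
    by (auto simp: scalar_vecs_def vecs_0)
  then show ?case
    by simp
next
  case (Suc n)
  have "scalar_vecs (Suc n) = (\<lambda>(u, z). u(n := z)) ` (scalar_vecs n \<times> F)"
  proof
    show "scalar_vecs (Suc n) \<subseteq> (\<lambda>(u, z). u(n := z)) ` (scalar_vecs n \<times> F)"
    proof
      fix w assume "w \<in> scalar_vecs (Suc n)"
      then have "w(n := 0) \<in> scalar_vecs n" "w n \<in> F" "w = (\<lambda>(u, z). u(n := z)) (w(n := 0), w n)"
        by (auto simp: scalar_vecs_def vecs_def)
      then show "w \<in> (\<lambda>(u, z). u(n := z)) ` (scalar_vecs n \<times> F)"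
        by blast
    qed
  qed (auto simp: scalar_vecs_def vecs_def less_Suc_eq)
  moreover have "inj_on (\<lambda>(u, z). u(n := z)) (scalar_vecs n \<times> F)"
    by (rule inj_on_subset [OF inj_on_fun_upd_vecs]) (auto simp: scalar_vecs_def)
  ultimately show ?case
    by (simp add: card_image card_cartesian_product card_F Suc.IH)
qed

lemma dot_in_Fspan: "l \<in> scalar_vecs n \<Longrightarrow> dot n l u \<in> Fspan F (u ` {..<n})"
  unfolding dot_def scalar_vecs_def by (intro Fspan_sum Fspan_scale Fspan_superset) auto

lemma dot_in_subfield: "l \<in> scalar_vecs n \<Longrightarrow> l' \<in> scalar_vecs n \<Longrightarrow> dot n l l' \<in> F"
  unfolding dot_def scalar_vecs_def by (intro subfield_sum subfield_mult) auto

lemma Fspan_coords_eq: "Fspan F (u ` {..<n}) = (\<lambda>l. dot n l u) ` scalar_vecs n"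
proof
  show "(\<lambda>l. dot n l u) ` scalar_vecs n \<subseteq> Fspan F (u ` {..<n})"
    using dot_in_Fspan by blast
  have "u i \<in> (\<lambda>l. dot n l u) ` scalar_vecs n" if "i < n" for i
  proof
    show "(\<lambda>j. if j = i then 1 else 0) \<in> scalar_vecs n"
      using that subfield_0 subfield_1 by (auto simp: scalar_vecs_def vecs_def)
    show "u i = dot n (\<lambda>j. if j = i then 1 else 0) u"
      using that by (simp add: dot_def if_distrib [of "\<lambda>a. a * _"] cong: if_cong)
  qed
  moreover have "0 \<in> (\<lambda>l. dot n l u) ` scalar_vecs n"
    by (rule image_eqI [of _ _ "\<lambda>_. 0"]) (simp_all add: dot_def)
  moreover have "x + y \<in> (\<lambda>l. dot n l u) ` scalar_vecs n"
    if xy: "x \<in> (\<lambda>l. dot n l u) ` scalar_vecs n" "y \<in> (\<lambda>l. dot n l u) ` scalar_vecs n" for x y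
  proof -
    obtain l l' where "l \<in> scalar_vecs n" "l' \<in> scalar_vecs n" "x = dot n l u" "y = dot n l' u"
      using xy by blast
    then show ?thesis
      by (intro image_eqI [of _ _ "\<lambda>i. l i + l' i"])
        (auto simp: dot_add_left scalar_vecs_def vecs_def subfield_add)
  qed
  moreover have "a * x \<in> (\<lambda>l. dot n l u) ` scalar_vecs n"
    if a: "a \<in> F" and x: "x \<in> (\<lambda>l. dot n l u) ` scalar_vecs n" for a x
  proof -
    obtain l where "l \<in> scalar_vecs n" "x = dot n l u"
      using x by blast
    then show ?thesis
      using a by (intro image_eqI [of _ _ "\<lambda>i. a * l i"])
        (auto simp: dot_def sum_distrib_left mult.assoc scalar_vecs_def vecs_def subfield_mult)
  qed
  ultimately show "Fspan F (u ` {..<n}) \<subseteq> (\<lambda>l. dot n l u) ` scalar_vecs n"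
    by (intro Fspan_minimal) auto
qed

lemma card_Fspan_coords: "card (Fspan F (u ` {..<n})) = q ^ rk F n u"
  unfolding rk_def by (rule card_Fspan)

lemma q_power_inject: "q ^ a = q ^ b \<longleftrightarrow> a = b"
  using two_le_q by (simp add: power_inject_exp)

lemma q_power_le_iff: "q ^ a \<le> q ^ b \<longleftrightarrow> a \<le> b"
  using two_le_q by (simp add: power_increasing_iff)

lemma rk_Suc:
  "rk F (Suc n) u = (if u n \<in> Fspan F (u ` {..<n}) then rk F n u else Suc (rk F n u))"
proof -
  have coords: "u ` {..<Suc n} = insert (u n) (u ` {..<n})"
    by (auto simp: lessThan_Suc)
  show ?thesis
  proof (cases "u n \<in> Fspan F (u ` {..<n})")
    case True
    then show ?thesis
      by (simp add: rk_def Fdim_def coords Fspan_insert_absorb)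
  next
    case False
    have "q ^ rk F (Suc n) u = q ^ Suc (rk F n u)"
      using card_Fspan_insert [OF False] by (simp add: card_Fspan_coords [symmetric] coords)
    then show ?thesis
      using False by (simp only: q_power_inject if_False)
  qed
qed

lemma rk_0 [simp]: "rk F 0 u = 0"
proof -
  have "q ^ rk F 0 u = q ^ 0"
    using card_Fspan_coords [of u 0] by (simp add: Fspan_empty)
  then show ?thesis
    by (simp only: q_power_inject)
qed

lemma rk_le: "rk F n u \<le> n"
  by (induction n) (simp_all add: rk_Suc)

lemma rk_zero [simp]: "rk F n (\<lambda>_. 0) = 0"
  by (induction n) (simp_all add: rk_Suc zero_in_Fspan)

lemma rk_permute:
  assumes "\<sigma> permutes {..<n}"
  shows "rk F n (u \<circ> \<sigma>) = rk F n u"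
  unfolding rk_def image_comp [symmetric] permutes_image [OF assms] ..

lemma rk_less_imp_dependent_coord:
  "rk F n c < n \<Longrightarrow> \<exists>i<n. c i \<in> Fspan F (c ` ({..<n} - {i}))"
proof (induction n)
  case (Suc n)
  show ?case
  proof (cases "c n \<in> Fspan F (c ` {..<n})")
    case True
    moreover have "{..<Suc n} - {n} = {..<n}"
      by auto
    ultimately show ?thesis
      by (intro exI [of _ n]) simp
  next
    case False
    then have "rk F n c < n"
      using Suc.prems by (simp add: rk_Suc)
    then obtain i where "i < n" "c i \<in> Fspan F (c ` ({..<n} - {i}))"
      using Suc.IH by blast
    moreover have "Fspan F (c ` ({..<n} - {i})) \<subseteq> Fspan F (c ` ({..<Suc n} - {i}))"
      by (intro Fspan_mono image_mono) auto
    ultimately show ?thesis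
      by (intro exI [of _ i]) auto
  qed
qed simp

lemma card_dot_fiber:
  assumes "w \<in> Fspan F (u ` {..<n})"
  shows "card {l \<in> scalar_vecs n. dot n l u = w} * q ^ rk F n u = q ^ n"
proof -
  define fiber where "fiber w = {l \<in> scalar_vecs n. dot n l u = w}" for w
  have card_fiber: "card (fiber w) = card (fiber 0)" if w: "w \<in> Fspan F (u ` {..<n})" for w
  proof -
    obtain l0 where l0: "l0 \<in> scalar_vecs n" "dot n l0 u = w"
      using w unfolding Fspan_coords_eq by blast
    have "fiber w = (\<lambda>l i. l0 i + l i) ` fiber 0"
    proof (intro equalityI subsetI)
      fix l assume "l \<in> fiber w"
      then have "(\<lambda>i. l i - l0 i) \<in> fiber 0"
        using l0 by (auto simp: fiber_def scalar_vecs_def vecs_def dot_diff_left subfield_diff)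
      then show "l \<in> (\<lambda>l i. l0 i + l i) ` fiber 0"
        by (rule image_eqI [rotated]) simp
    qed (use l0 in \<open>auto simp: fiber_def scalar_vecs_def vecs_def dot_add_left subfield_add\<close>)
    moreover have "inj_on (\<lambda>l i. l0 i + l i) (fiber 0)"
      by (rule inj_onI) (simp add: fun_eq_iff)
    ultimately show ?thesis
      by (simp add: card_image)
  qed
  have "q ^ n = card (scalar_vecs n)"
    by (simp add: card_scalar_vecs)
  also have "\<dots> = (\<Sum>w\<in>Fspan F (u ` {..<n}). card (fiber w))"
    unfolding card_eq_sum sum.image_gen [OF finite_scalar_vecs, where g = "\<lambda>l. dot n l u"]
    by (simp add: Fspan_coords_eq fiber_def)
  also have "\<dots> = q ^ rk F n u * card (fiber 0)"
    by (simp add: card_fiber card_Fspan_coords)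
  finally show ?thesis
    using card_fiber [OF assms] by (simp add: fiber_def mult.commute)
qed

lemma rk_le_rk_add_scaled:
  assumes d: "d \<notin> Fspan F (c ` {..<n})" and l: "l \<in> scalar_vecs n"
  shows "rk F n c \<le> rk F n (\<lambda>i. c i + d * l i)"
proof -
  define relations where "relations c' = {\<mu> \<in> scalar_vecs n. dot n \<mu> c' = 0}" for c'
  have "relations (\<lambda>i. c i + d * l i) \<subseteq> relations c"
  proof
    fix \<mu> assume "\<mu> \<in> relations (\<lambda>i. c i + d * l i)"
    then have \<mu>: "\<mu> \<in> scalar_vecs n" and eq: "dot n \<mu> c + d * dot n \<mu> l = 0"
      by (simp_all add: relations_def dot_add_scaled_right)
    have "dot n \<mu> l = 0"
    proof (rule ccontr)
      assume nz: "dot n \<mu> l \<noteq> 0"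
      then have "d = - inverse (dot n \<mu> l) * dot n \<mu> c"
        using eq by (simp add: field_simps eq_neg_iff_add_eq_0)
      moreover have "- inverse (dot n \<mu> l) * dot n \<mu> c \<in> Fspan F (c ` {..<n})"
        using \<mu> l by (intro Fspan_scale subfield_uminus subfield_inverse dot_in_subfield dot_in_Fspan)
      ultimately show False
        using d by simp
    qed
    then show "\<mu> \<in> relations c"
      using \<mu> eq by (simp add: relations_def)
  qed
  then have "card (relations (\<lambda>i. c i + d * l i)) \<le> card (relations c)"
    by (intro card_mono) (simp_all add: relations_def)
  moreover have "card (relations c') * q ^ rk F n c' = q ^ n" for c'
    unfolding relations_def by (rule card_dot_fiber [OF zero_in_Fspan])
  ultimately have "card (relations c) * q ^ rk F n c \<le> card (relations c) * q ^ rk F n (\<lambda>i. c i + d * l i)"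
    by (metis mult_le_mono1)
  moreover have "card (relations c) > 0"
    using \<open>card (relations c) * q ^ rk F n c = q ^ n\<close> two_le_q by (auto intro: gr0I)
  ultimately show ?thesis
    by (simp add: q_power_le_iff)
qed

lemma rk_add_scaled_full:
  assumes "rk F n c = n" "d \<notin> Fspan F (c ` {..<n})" "l \<in> scalar_vecs n"
  shows "rk F n (\<lambda>i. c i + d * l i) = n"
  using rk_le_rk_add_scaled [OF assms(2,3)] rk_le [of n] assms(1) by (metis le_antisym)

lemma Fspan_shear_subset:
  assumes "\<mu> \<in> scalar_vecs n" "s \<in> F"
  shows "Fspan F (shear n \<mu> s w ` {..<Suc n}) \<subseteq> Fspan F (w ` {..<Suc n})"
proof (rule Fspan_subset, rule image_subsetI)
  fix i assume i: "i \<in> {..<Suc n}"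
  have "w i \<in> Fspan F (w ` {..<Suc n})" "w n \<in> Fspan F (w ` {..<Suc n})"
    using i by (auto intro: Fspan_superset)
  moreover have "s * \<mu> i \<in> F" if "i < n"
    using assms that by (simp add: scalar_vecs_def subfield_mult)
  ultimately have "w i + (s * \<mu> i) * w n \<in> Fspan F (w ` {..<Suc n})" if "i < n"
    using that by (intro Fspan_add Fspan_scale)
  then show "shear n \<mu> s w i \<in> Fspan F (w ` {..<Suc n})"
    using \<open>w i \<in> Fspan F (w ` {..<Suc n})\<close> by (simp add: shear_def mult_ac)
qed

lemma rk_shear:
  assumes "\<mu> \<in> scalar_vecs n" "s \<in> F"
  shows "rk F (Suc n) (shear n \<mu> s w) = rk F (Suc n) w"
proof -
  have "Fspan F (shear n \<mu> s w ` {..<Suc n}) = Fspan F (w ` {..<Suc n})"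
    using Fspan_shear_subset [OF assms] Fspan_shear_subset [OF assms(1), of "- s" "shear n \<mu> s w"]
      assms(2) subfield_uminus by auto
  then show ?thesis
    by (simp add: rk_def Fdim_def)
qed

lemma rk_fun_upd_same [simp]: "rk F n (u(n := z)) = rk F n u"
  by (simp add: rk_def fun_upd_image)

lemma rk_fun_upd:
  "rk F (Suc n) (u(n := z)) = (if z \<in> Fspan F (u ` {..<n}) then rk F n u else Suc (rk F n u))"
  by (simp add: rk_Suc fun_upd_image)

end

section \<open>Counting orthogonal vectors by rank\<close>

lemma add_mult_eq_0_iff:
  fixes a d x :: "'a::field"
  assumes "d \<noteq> 0"
  shows "a + x * d = 0 \<longleftrightarrow> x = - (a / d)"
  using assms by (auto simp: add_eq_0_iff field_simps)

lemma sum_of_bool_conj_eq: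
  assumes "finite A" "a \<in> A"
  shows "(\<Sum>x\<in>A. of_bool (x = a \<and> P x)) = of_bool (P a)"
proof -
  have "(\<Sum>x\<in>A. of_bool (x = a \<and> P x)) = (\<Sum>x\<in>A. if x = a then of_bool (P a) else 0)"
    by (rule sum.cong) auto
  then show ?thesis
    using assms by simp
qed

lemma sum_of_bool_filter: "finite A \<Longrightarrow> (\<Sum>x\<in>A. of_bool (P x)) = of_nat (card {x \<in> A. P x})"
  by (simp add: Int_def)

(* Counts are handled as sums of of_bool indicators; the simp rules that turn such sums back
   into cardinalities are disabled so that the sums can be rearranged. *)
declare sum_of_bool_eq [simp del] sum_mult_of_bool_eq [simp del] sum_of_bool_mult_eq [simp del]

context finite_subfield
begin

definition perp_count :: "nat \<Rightarrow> (nat \<Rightarrow> 'a) \<Rightarrow> int \<Rightarrow> nat" where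
  "perp_count n c k = card {u \<in> vecs n. dot n u c = 0 \<and> int (rk F n u) = k}"

lemma real_perp_count:
  "real (perp_count n c k) = (\<Sum>u\<in>vecs n. of_bool (dot n u c = 0 \<and> int (rk F n u) = k))"
  by (simp add: perp_count_def sum_of_bool_filter)

lemma perp_count_0: "perp_count 0 c k = of_bool (k = 0)"
proof -
  have "{u \<in> vecs 0. dot 0 u c = 0 \<and> int (rk F 0 u) = k} = (if k = 0 then {\<lambda>_. 0} else {})"
    by (auto simp: vecs_0 dot_def)
  then show ?thesis
    by (simp add: perp_count_def)
qed

lemma perp_count_transfer:
  assumes "bij_betw T (vecs n) (vecs n)"
    and "\<And>u. u \<in> vecs n \<Longrightarrow> dot n (T u) c' = dot n u c \<and> rk F n (T u) = rk F n u"
  shows "perp_count n c' k = perp_count n c k"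
proof -
  have "real (perp_count n c' k) = (\<Sum>u\<in>vecs n. of_bool (dot n (T u) c' = 0 \<and> int (rk F n (T u)) = k))"
    unfolding real_perp_count by (rule sum.reindex_bij_betw [OF assms(1), symmetric])
  also have "\<dots> = real (perp_count n c k)"
    unfolding real_perp_count using assms(2) by (intro sum.cong) auto
  finally show ?thesis
    by simp
qed

lemma perp_count_permute:
  assumes "\<sigma> permutes {..<n}"
  shows "perp_count n (c \<circ> \<sigma>) k = perp_count n c k"
  by (rule perp_count_transfer [OF bij_betw_permute_vecs [OF assms]])
    (simp add: dot_permute [OF assms] rk_permute [OF assms])

lemma perp_count_shear:
  assumes "d \<in> Fspan F (c ` {..<n})"
  shows "perp_count (Suc n) (c(n := 0)) k = perp_count (Suc n) (c(n := d)) k"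
proof -
  obtain \<mu> where \<mu>: "\<mu> \<in> scalar_vecs n" "d = dot n \<mu> c"
    using assms unfolding Fspan_coords_eq by blast
  show ?thesis
  proof (rule perp_count_transfer [OF bij_betw_shear_vecs])
    fix w
    show "dot (Suc n) (shear n \<mu> 1 w) (c(n := 0)) = dot (Suc n) w (c(n := d))
      \<and> rk F (Suc n) (shear n \<mu> 1 w) = rk F (Suc n) w"
      using \<mu> subfield_1 unfolding dot_shear by (simp add: rk_shear dot_Suc)
  qed
qed

lemma sum_dot_fiber:
  "(\<Sum>l\<in>scalar_vecs n. of_bool (dot n l u = w)) =
    of_bool (w \<in> Fspan F (u ` {..<n})) * real q powi (int n - int (rk F n u))"
proof -
  have "(\<Sum>l\<in>scalar_vecs n. of_bool (dot n l u = w)) = real (card {l \<in> scalar_vecs n. dot n l u = w})"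
    by (rule sum_of_bool_filter) simp
  also have "\<dots> = of_bool (w \<in> Fspan F (u ` {..<n})) * real q powi (int n - int (rk F n u))"
  proof (cases "w \<in> Fspan F (u ` {..<n})")
    case True
    have "real (card {l \<in> scalar_vecs n. dot n l u = w}) * real q ^ rk F n u = real q ^ n"
      using card_dot_fiber [OF True] by (metis of_nat_mult of_nat_power)
    then show ?thesis
      using True two_le_q by (simp add: power_int_diff field_simps)
  next
    case False
    then have "{l \<in> scalar_vecs n. dot n l u = w} = {}"
      using dot_in_Fspan by blast
    then show ?thesis
      using False by simp
  qed
  finally show ?thesis .
qed

(* Vectors u of rank j whose unique extension orthogonal to c(n := d), namely
   u(n := - (u . c) / d), again has rank j. *)
definition stable_ext_count :: "nat \<Rightarrow> (nat \<Rightarrow> 'a) \<Rightarrow> 'a \<Rightarrow> int \<Rightarrow> nat" where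
  "stable_ext_count n c d j =
    card {u \<in> vecs n. - (dot n u c / d) \<in> Fspan F (u ` {..<n}) \<and> int (rk F n u) = j}"

lemma perp_count_Suc_nonzero:
  assumes "d \<noteq> 0"
  shows "real (perp_count (Suc n) (c(n := d)) k) = real (stable_ext_count n c d k)
    + real (perp_count n (\<lambda>_. 0) (k - 1)) - real (stable_ext_count n c d (k - 1))"
proof -
  define z where "z u = - (dot n u c / d)" for u
  have solve: "dot n u c + z' * d = 0 \<longleftrightarrow> z' = z u" for u z'
    by (simp add: add_mult_eq_0_iff [OF assms] z_def)
  have "real (perp_count (Suc n) (c(n := d)) k) =
      (\<Sum>u\<in>vecs n. \<Sum>z'\<in>UNIV. of_bool (dot n u c + z' * d = 0 \<and> int (rk F (Suc n) (u(n := z'))) = k))"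
    by (simp add: real_perp_count sum_vecs_Suc dot_Suc)
  also have "\<dots> = (\<Sum>u\<in>vecs n. \<Sum>z'\<in>UNIV. of_bool (z' = z u \<and> int (rk F (Suc n) (u(n := z'))) = k))"
    by (simp only: solve)
  also have "\<dots> = (\<Sum>u\<in>vecs n. of_bool (int (rk F (Suc n) (u(n := z u))) = k))"
    by (simp add: sum_of_bool_conj_eq)
  also have "\<dots> = (\<Sum>u\<in>vecs n. of_bool (z u \<in> Fspan F (u ` {..<n}) \<and> int (rk F n u) = k)
      + (of_bool (dot n u (\<lambda>_. 0) = 0 \<and> int (rk F n u) = k - 1)
         - of_bool (z u \<in> Fspan F (u ` {..<n}) \<and> int (rk F n u) = k - 1)))"
    by (intro sum.cong) (auto simp: rk_fun_upd dot_def)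
  finally show ?thesis
    by (simp add: sum.distrib sum_subtractf real_perp_count stable_ext_count_def sum_of_bool_filter z_def)
qed

lemma stable_ext_count_eq:
  assumes "d \<noteq> 0"
  shows "real (stable_ext_count n c d j) = real q powi (j - int n) *
    (\<Sum>l\<in>scalar_vecs n. real (perp_count n (\<lambda>i. c i + d * l i) j))"
proof -
  define z where "z u = - (dot n u c / d)" for u
  have solve: "dot n u (\<lambda>i. c i + d * l i) = 0 \<longleftrightarrow> dot n l u = z u" for u l
    using add_mult_eq_0_iff [OF assms, of "dot n u c" "dot n l u"]
    by (simp add: dot_add_scaled_right dot_commute [of n u l] mult.commute z_def)
  have "(\<Sum>l\<in>scalar_vecs n. real (perp_count n (\<lambda>i. c i + d * l i) j)) =
      (\<Sum>u\<in>vecs n. of_bool (int (rk F n u) = j) * (\<Sum>l\<in>scalar_vecs n. of_bool (dot n l u = z u)))"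
    unfolding real_perp_count solve of_bool_conj sum_distrib_left
    by (subst sum.swap) (simp add: mult.commute)
  also have "\<dots> = (\<Sum>u\<in>vecs n. real q powi (int n - j) *
      of_bool (z u \<in> Fspan F (u ` {..<n}) \<and> int (rk F n u) = j))"
    by (intro sum.cong) (auto simp: sum_dot_fiber)
  also have "\<dots> = real q powi (int n - j) * real (stable_ext_count n c d j)"
    by (simp add: stable_ext_count_def sum_of_bool_filter z_def flip: sum_distrib_left)
  finally show ?thesis
    using two_le_q by (simp add: power_int_diff field_simps)
qed

lemma rank_weight_enum_perp_span1:
  "rank_weight_enum F n (perp n (span1 v)) x y =
    (\<Sum>k\<le>n. real (perp_count n v (int k)) * (y ^ k * x ^ (n - k)))"
proof -
  have "rank_weight_enum F n (perp n (span1 v)) x y =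
      (\<Sum>u\<in>vecs n. of_bool (dot n u v = 0) * (y ^ rk F n u * x ^ (n - rk F n u)))"
    by (simp add: rank_weight_enum_def perp_span1 sum_of_bool_mult_eq Int_def)
  also have "\<dots> = (\<Sum>u\<in>vecs n. \<Sum>k\<le>n. of_bool (dot n u v = 0 \<and> int (rk F n u) = int k) * (y ^ k * x ^ (n - k)))"
  proof (intro sum.cong refl)
    fix u
    have "(\<Sum>k\<le>n. of_bool (rk F n u = k) * (y ^ k * x ^ (n - k))) =
        (\<Sum>k\<le>n. if k = rk F n u then y ^ rk F n u * x ^ (n - rk F n u) else 0)"
      by (rule sum.cong) auto
    then show "of_bool (dot n u v = 0) * (y ^ rk F n u * x ^ (n - rk F n u)) =
        (\<Sum>k\<le>n. of_bool (dot n u v = 0 \<and> int (rk F n u) = int k) * (y ^ k * x ^ (n - k)))"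
      by (simp add: of_bool_conj rk_le mult.assoc sum_distrib_left [symmetric])
  qed
  also have "\<dots> = (\<Sum>k\<le>n. real (perp_count n v (int k)) * (y ^ k * x ^ (n - k)))"
    by (subst sum.swap) (simp add: real_perp_count sum_distrib_right)
  finally show ?thesis .
qed

lemma full_rank_split_last:
  assumes "c \<in> vecs (Suc n)" "rk F (Suc n) c = Suc n"
  obtains c0 d where "c0 \<in> vecs n" "c = c0(n := d)" "rk F n c0 = n" "d \<notin> Fspan F (c0 ` {..<n})"
proof
  show "c(n := 0) \<in> vecs n" "c = (c(n := 0))(n := c n)"
    using assms(1) by (auto simp: vecs_def)
  show "rk F n (c(n := 0)) = n" "c n \<notin> Fspan F (c(n := 0) ` {..<n})"
    using assms(2) rk_le [of n c] by (auto simp: rk_Suc fun_upd_image split: if_splits)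
qed

lemma perp_count_reduce_dependent:
  assumes "c \<in> vecs (Suc n)" "rk F (Suc n) c < Suc n"
  obtains c0 where "c0 \<in> vecs n" "rk F n c0 = rk F (Suc n) c"
    "\<And>k. perp_count (Suc n) c k = perp_count (Suc n) (c0(n := 0)) k"
proof -
  obtain i where i: "i < Suc n" "c i \<in> Fspan F (c ` ({..<Suc n} - {i}))"
    using rk_less_imp_dependent_coord [OF assms(2)] by blast
  define \<sigma> where "\<sigma> = transpose i n"
  define c' where "c' = c \<circ> \<sigma>"
  have \<sigma>: "\<sigma> permutes {..<Suc n}"
    using i by (simp add: \<sigma>_def permutes_swap_id)
  have "\<sigma> ` {..<n} = \<sigma> ` ({..<Suc n} - {n})"
    by (metis Diff_insert_absorb lessThan_Suc lessThan_iff less_irrefl)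
  also have "\<dots> = {..<Suc n} - {i}"
    using permutes_image [OF \<sigma>] permutes_inj [OF \<sigma>] by (simp add: image_set_diff \<sigma>_def)
  finally have "c' ` {..<n} = c ` ({..<Suc n} - {i})"
    unfolding c'_def image_comp [symmetric] by simp
  then have dep: "c' n \<in> Fspan F (c' ` {..<n})"
    using i by (simp add: c'_def \<sigma>_def)
  show ?thesis
  proof
    show "c'(n := 0) \<in> vecs n"
      using assms(1) permutes_not_in [OF \<sigma>] by (auto simp: c'_def vecs_def)
    show "rk F n (c'(n := 0)) = rk F (Suc n) c"
      using dep rk_permute [OF \<sigma>, of c] by (simp add: c'_def [symmetric] rk_Suc)
    show "perp_count (Suc n) c k = perp_count (Suc n) ((c'(n := 0))(n := 0)) k" for k
      using perp_count_permute [OF \<sigma>, of c k] perp_count_shear [OF dep, of k]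
      by (simp add: c'_def [symmetric])
  qed
qed

end

locale finite_field_extension = finite_subfield +
  fixes m :: nat
  assumes card_UNIV: "card (UNIV :: 'a set) = q ^ m"
begin

lemma count_rk_extensions:
  "(\<Sum>z\<in>UNIV. of_bool (int (rk F (Suc n) (u(n := z))) = k)) =
    real q powi k * of_bool (int (rk F n u) = k)
    + (real q ^ m - real q powi (k - 1)) * of_bool (int (rk F n u) = k - 1)"
proof -
  define V where "V = Fspan F (u ` {..<n})"
  define r where "r = rk F n u"
  have card_V: "card V = q ^ r"
    by (simp add: V_def r_def card_Fspan_coords)
  then have "card V \<le> q ^ m"
    using card_mono [of UNIV V] card_UNIV by simp
  then have card_compl: "real (card (UNIV - V)) = real q ^ m - real q ^ r"
    by (simp add: card_Diff_subset card_UNIV card_V of_nat_diff)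
  have "(\<Sum>z\<in>UNIV. of_bool (int (rk F (Suc n) (u(n := z))) = k)) =
      (\<Sum>z\<in>UNIV - V. of_bool (int (rk F (Suc n) (u(n := z))) = k))
      + (\<Sum>z\<in>V. of_bool (int (rk F (Suc n) (u(n := z))) = k))"
    by (rule sum.subset_diff) auto
  also have "\<dots> = (\<Sum>z\<in>UNIV - V. of_bool (int r = k - 1)) + (\<Sum>z\<in>V. of_bool (int r = k))"
    by (intro arg_cong2 [where f = "(+)"] sum.cong) (auto simp: rk_fun_upd V_def r_def)
  also have "\<dots> = (real q ^ m - real q ^ r) * of_bool (int r = k - 1) + real q ^ r * of_bool (int r = k)"
    by (simp add: card_compl card_V)
  moreover have "real q powi k = real q ^ r" if "int r = k"
    using that by (metis power_int_of_nat)
  moreover have "real q powi (k - 1) = real q ^ r" if "int r = k - 1"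
    using that by (metis power_int_of_nat)
  ultimately show ?thesis
    unfolding r_def [symmetric] by (cases "int r = k") auto
qed

lemma perp_count_Suc_zero:
  "real (perp_count (Suc n) (c(n := 0)) k) = real q powi k * real (perp_count n c k)
    + (real q ^ m - real q powi (k - 1)) * real (perp_count n c (k - 1))"
proof -
  have "real (perp_count (Suc n) (c(n := 0)) k) =
      (\<Sum>u\<in>vecs n. of_bool (dot n u c = 0) * (\<Sum>z\<in>UNIV. of_bool (int (rk F (Suc n) (u(n := z))) = k)))"
    by (simp add: real_perp_count sum_vecs_Suc dot_Suc of_bool_conj sum_distrib_left)
  also have "\<dots> = (\<Sum>u\<in>vecs n. real q powi k * of_bool (dot n u c = 0 \<and> int (rk F n u) = k)
      + (real q ^ m - real q powi (k - 1)) * of_bool (dot n u c = 0 \<and> int (rk F n u) = k - 1))"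
    by (intro sum.cong refl) (simp add: count_rk_extensions of_bool_conj algebra_simps)
  also have "\<dots> = real q powi k * real (perp_count n c k)
      + (real q ^ m - real q powi (k - 1)) * real (perp_count n c (k - 1))"
    by (simp add: sum.distrib real_perp_count sum_distrib_left)
  finally show ?thesis .
qed

lemma perp_count_eq_dual_enum_coeff:
  "c \<in> vecs n \<Longrightarrow> real (perp_count n c k) = dual_enum_coeff (real q) (int m) n (rk F n c) k"
proof (induction n arbitrary: c k)
  case 0
  then show ?case
    using two_le_q by (simp add: perp_count_0 dual_enum_coeff_0_0)
next
  case (Suc n)
  have q: "real q \<noteq> 0"
    using two_le_q by simp
  consider "rk F (Suc n) c < Suc n" | "rk F (Suc n) c = Suc n"
    using rk_le [of "Suc n" c] by linarith
  then show ?case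
  proof cases
    case 1
    then obtain c0 where c0: "c0 \<in> vecs n" "rk F n c0 = rk F (Suc n) c"
      and count: "\<And>k. perp_count (Suc n) c k = perp_count (Suc n) (c0(n := 0)) k"
      using perp_count_reduce_dependent [OF Suc.prems] by blast
    have "rk F (Suc n) c \<le> n"
      using c0(2) rk_le [of n c0] by simp
    then show ?thesis
      using Suc.IH [OF c0(1)] perp_count_Suc_zero [of n c0 k] dual_enum_coeff_Suc [OF q]
      by (simp add: count c0(2))
  next
    case 2
    then obtain c0 d where c0: "c0 \<in> vecs n" and c: "c = c0(n := d)"
      and rk_c0: "rk F n c0 = n" and indep: "d \<notin> Fspan F (c0 ` {..<n})"
      using full_rank_split_last [OF Suc.prems] by blast
    then have "d \<noteq> 0"
      using zero_in_Fspan by blast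
    have "(\<lambda>i. c0 i + d * l i) \<in> vecs n" if "l \<in> scalar_vecs n" for l
      using c0 that by (simp add: vecs_def scalar_vecs_def)
    then have "real (stable_ext_count n c0 d j) = real q powi j * dual_enum_coeff (real q) (int m) n n j" for j
      using q rk_add_scaled_full [OF rk_c0 indep]
      by (simp add: stable_ext_count_eq [OF \<open>d \<noteq> 0\<close>] Suc.IH card_scalar_vecs power_int_diff)
    then show ?thesis
      using perp_count_Suc_nonzero [OF \<open>d \<noteq> 0\<close>, of n c0 k] Suc.IH [of "\<lambda>_. 0"]
        dual_enum_coeff_Suc_Suc [OF q] 2
      by (simp add: c [symmetric])
  qed
qed

end

theorem proposition1:
  fixes F :: "'a::{field,finite} set" and q m n :: nat and v :: "nat \<Rightarrow> 'a"
    and x y :: real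
  assumes "is_subfield F"
    and "card F = q"
    and "card (UNIV :: 'a set) = q ^ m"
    and "v \<in> vecs n"
  shows "rank_weight_enum F n (perp n (span1 v)) x y =
    ((real q) powi (- int m)) *
      (hp_eval (qpow (real q) (hp_A (real q)) n) (int m) x y
       + (real q ^ m - 1) *
         hp_eval (qprod (real q) (qpow (real q) hp_B (rk F n v))
                                 (qpow (real q) (hp_A (real q)) (n - rk F n v))) (int m) x y)"
proof -
  interpret finite_field_extension F q m
    using assms(1-3) by unfold_locales
  show ?thesis
    using sum_dual_enum_coeff_eq_hp_eval [OF rk_le, of "real q" "int m" n v y x]
    by (simp add: rank_weight_enum_perp_span1 perp_count_eq_dual_enum_coeff [OF assms(4)])
qed

end
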